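(* With $\mathcal Y=\min\{a_2\mathfrak g_{sr},\mathfrak g_{rd}\}$, $\bar C_{s_2,\mathrm{MRC}}(\rho)=\tfrac12\mathbb E[\log_2(1+\rho\mathcal Y)]$ and $\Xi=\frac{m_{sr}}{\Omega_{sr}a_2}+\frac{m_{rd}}{\Omega_{rd}}$, \begin{align*} \lim_{\rho\to\infty}\Big[\bar C_{s_2,\mathrm{MRC}}(\rho)-\tfrac12\log_2\rho\Big]=\frac{1}{2\ln2}\sum_{\mu=0}^{m_{sr}N_r-1}\sum_{\nu=0}^{m_{rd}N_d-1}&\frac{m_{sr}^{\mu}m_{rd}^{\nu}}{a_2^{\mu}\Omega_{sr}^{\mu}\Omega_{rd}^{\nu}\mu!\,\nu!\,\Xi^{\mu+\nu}}\\ &\times\Big[\Gamma(\mu+\nu+1)\{\psi(\mu+\nu+1)-\ln\Xi\}-(\mu+\nu)\Gamma(\mu+\nu)\{\psi(\mu+\nu)-\ln\Xi\}\Big], \end{align*} where the second term in the bracket is taken to be $0$ when $\mu+\nu=0$. In particular, $\bar C_{s_1,\mathrm{MRC}}+\bar C_{s_2,\mathrm{MRC}}=\tfrac12\log_2\rho+O(1)$ as $\rho\to\infty$, where $\bar C_{s_1,\mathrm{MRC}}=\tfrac12\mathbb E[\log_2(1+\frac{a_1\rho\mathcal X}{a_2\rho\mathcal X+1})]$ with $\mathcal X=\min\{\mathfrak g_{sr},\mathfrak g_{sd}\}$.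
   Context: Let $N_r,N_d$ be positive integers, $m_{sr},m_{sd},m_{rd}$ positive integers, and $\Omega_{sr},\Omega_{sd},\Omega_{rd}>0$. Let $\{G_{sr,i}\}_{i=1}^{N_r}$, $\{G_{sd,j}\}_{j=1}^{N_d}$, $\{G_{rd,k}\}_{k=1}^{N_d}$ be mutually independent random variables, where each $G_{sr,i}$ has the Gamma density $\frac{(m_{sr}/\Omega_{sr})^{m_{sr}}x^{m_{sr}-1}}{\Gamma(m_{sr})}e^{-m_{sr}x/\Omega_{sr}}$, $x>0$, and analogously $G_{sd,j}$ with $(m_{sd},\Omega_{sd})$ and $G_{rd,k}$ with $(m_{rd},\Omega_{rd})$. MRC gains: $\mathfrak g_{sr}=\sum_i G_{sr,i}$, $\mathfrak g_{sd}=\sum_j G_{sd,j}$, $\mathfrak g_{rd}=\sum_k G_{rd,k}$. Let $a_1,a_2\in(0,1)$, $a_1+a_2=1$, $a_1>a_2$. $\psi$ is the digamma function. *)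

theory Defs
  imports "HOL-Probability.Probability" "HOL-Library.Landau_Symbols"
begin

text \<open>Gamma (Nakagami-m power) density with shape m and mean Omega, as in the paper.\<close>
definition gamma_pdf :: "nat \<Rightarrow> real \<Rightarrow> real \<Rightarrow> real" where
  "gamma_pdf m \<Omega> x = (if x > 0 then
     (real m / \<Omega>) ^ m * x ^ (m - 1) / Gamma (real m) * exp (- real m * x / \<Omega>) else 0)"

text \<open>Index set for the three families: Inl i = sr-link i, Inr (Inl j) = sd-link j,
  Inr (Inr k) = rd-link k.\<close>
definition link_idx :: "nat \<Rightarrow> nat \<Rightarrow> (nat + nat + nat) set" where
  "link_idx Nr Nd = Inl ` {1..Nr} \<union> Inr ` Inl ` {1..Nd} \<union> Inr ` Inr ` {1..Nd}"

definition all_links ::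
  "(nat \<Rightarrow> 'a \<Rightarrow> real) \<Rightarrow> (nat \<Rightarrow> 'a \<Rightarrow> real) \<Rightarrow> (nat \<Rightarrow> 'a \<Rightarrow> real)
     \<Rightarrow> nat + nat + nat \<Rightarrow> 'a \<Rightarrow> real" where
  "all_links Gsr Gsd Grd = (\<lambda>t. case t of Inl i \<Rightarrow> Gsr i | Inr (Inl j) \<Rightarrow> Gsd j | Inr (Inr k) \<Rightarrow> Grd k)"

end

theory Submission
  imports Defs
begin

(* Sums of i.i.d. Gamma powers are Erlang, so Y = min (a2 gsr) grd is the minimum of two
   independent Erlang variables with rates alpha = msr / (Omega_sr a2) and beta = mrd / Omega_rd.
   The survival function of Y is a product of two Poisson tail sums, i.e. a finite sum of terms
   alpha^mu beta^nu y^(mu + nu) exp (-(alpha + beta) y) / (mu! nu!); differentiating it writes the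
   density of Y as a finite combination of Gamma kernels, whose logarithmic moments are
   Gamma n (psi n - ln c) / c^n, the derivative of Gamma x / c^x at x = n. Since
   log2 (1 + rho Y) - log2 rho = log2 (1 / rho + Y) tends to log2 Y and is dominated by
   |ln Y| + Y, the high-SNR offset of C2 is E[ln Y] / ln 2. The rate C1 stays below
   (1/2) log2 (1 + a1 / a2) because the SINR a1 rho X / (a2 rho X + 1) never exceeds a1 / a2. *)

lemma abs_exp_minus_one_le: "\<bar>exp (a::real) - 1\<bar> \<le> \<bar>a\<bar> * exp (max a 0)"
proof (cases "a \<ge> 0")
  case True
  have "exp a * (1 - a) \<le> exp a * exp (- a)"
    using exp_ge_add_one_self[of "- a"] by (intro mult_left_mono) auto
  then show ?thesis
    using True by (simp add: exp_minus_inverse algebra_simps)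
next
  case False
  then have "\<bar>exp a - 1\<bar> = 1 - exp a" "\<bar>a\<bar> * exp (max a 0) = - a"
    by (simp_all add: max_def)
  with exp_ge_add_one_self[of a] show ?thesis
    by linarith
qed

lemma abs_powr_difference_quotient_le:
  fixes t h :: real
  assumes t: "t > 0" and h: "0 < h" "h \<le> 1"
  shows "\<bar>(t powr h - 1) / h\<bar> \<le> \<bar>ln t\<bar> * (1 + t)"
proof -
  have "exp (max (h * ln t) 0) = max (t powr h) 1"
    using t by (simp add: powr_def max_def mult.commute)
  also have "\<dots> \<le> 1 + t"
    using t h powr_le1[of h t] powr_mono[of h 1 t] by (cases "t \<ge> 1") auto
  finally have "\<bar>h * ln t\<bar> * exp (max (h * ln t) 0) \<le> \<bar>h * ln t\<bar> * (1 + t)"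
    by (rule mult_left_mono) simp
  with abs_exp_minus_one_le[of "h * ln t"]
  have "\<bar>exp (h * ln t) - 1\<bar> \<le> \<bar>h * ln t\<bar> * (1 + t)"
    by linarith
  then show ?thesis
    using t h by (simp add: powr_def mult.commute abs_mult divide_le_eq mult.left_commute)
qed

lemma abs_ln_le:
  fixes t :: real
  assumes t: "t > 0"
  shows "\<bar>ln t\<bar> \<le> 2 * t powr (-1/2) + t"
proof (cases "t \<ge> 1")
  case True
  then show ?thesis
    using ln_le_minus_one[OF t] ln_ge_zero[OF True] powr_ge_zero[of t "-1/2"] by linarith
next
  case False
  then have "\<bar>ln t\<bar> = 2 * ln (t powr (-1/2))"
    using t by (simp add: ln_powr)
  also have "ln (t powr (-1/2)) \<le> t powr (-1/2) - 1"
    using t by (intro ln_le_minus_one) simp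
  finally show ?thesis
    using t by simp
qed

lemma powr_mult_abs_powr_difference_quotient_le:
  fixes t h x :: real
  assumes t: "t > 0" and h: "0 < h" "h \<le> 1"
  shows "t powr (x - 1) * \<bar>(t powr h - 1) / h\<bar>
           \<le> 2 * t powr (x - 3/2) + 2 * t powr (x - 1/2) + t powr x + t powr (x + 1)"
proof -
  have "\<bar>(t powr h - 1) / h\<bar> \<le> (2 * t powr (-1/2) + t) * (1 + t)"
    using abs_powr_difference_quotient_le[OF t h] abs_ln_le[OF t] t
    by (meson add_nonneg_nonneg less_imp_le mult_right_mono order_trans zero_le_one)
  then have "t powr (x - 1) * \<bar>(t powr h - 1) / h\<bar> \<le> t powr (x - 1) * ((2 * t powr (-1/2) + t) * (1 + t))"
    by (rule mult_left_mono) simp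
  moreover have "t powr (x - 3/2) = t powr (x - 1) * t powr (-1/2)"
    "t powr (x - 1/2) = t * (t powr (x - 1) * t powr (-1/2))"
    "t powr x = t * t powr (x - 1)" "t powr (x + 1) = t * (t * t powr (x - 1))"
    using t by (simp_all add: powr_add[symmetric] powr_mult_base add.commute)
  ultimately show ?thesis
    by (simp add: algebra_simps)
qed

lemma difference_quotient_LIMSEQ:
  fixes f :: "real \<Rightarrow> real"
  assumes "(f has_field_derivative D) (at x)"
  shows "(\<lambda>k. (f (x + 1 / Suc k) - f x) / (1 / Suc k)) \<longlonglongrightarrow> D"
proof -
  have quotient: "((\<lambda>y. (f y - f x) / (y - x)) \<longlongrightarrow> D) (at x)"
    using assms by (simp add: has_field_derivative_iff)
  have "filterlim (\<lambda>k. x + 1 / real (Suc k)) (at x) sequentially"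
    using tendsto_add[OF tendsto_const LIMSEQ_inverse_real_of_nat, of x]
    by (auto simp: filterlim_at inverse_eq_divide)
  from filterlim_compose[OF quotient this] show ?thesis
    by simp
qed

section \<open>Logarithmic moments of Gamma kernels\<close>

lemma has_bochner_integral_powr_exp:
  fixes x c :: real
  assumes x: "x > 0" and c: "c > 0"
  shows "has_bochner_integral lborel
           (\<lambda>t. indicator {0<..} t * (t powr (x - 1) * exp (- c * t))) (Gamma x / c powr x)"
proof -
  define g where "g = (\<lambda>t::real. indicator {0<..} t * (t powr (x - 1) * exp (- c * t)))"
  define f where "f = (\<lambda>t::real. ennreal (t powr (x - 1) / exp t) * indicator {0..} t)"
  have "integral\<^sup>N lborel f = ennreal (Gamma x)"
    unfolding f_def by (rule nn_integral_has_integral_lebesgue'[OF _ Gamma_integral_real[OF x]]) auto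
  also have "integral\<^sup>N lborel f = c * (\<integral>\<^sup>+s. f (0 + c * s) \<partial>lborel)"
    using c by (subst nn_integral_real_affine[where c = c and t = 0]) (auto simp: f_def)
  also have "(\<lambda>s. f (0 + c * s)) = (\<lambda>s. ennreal (c powr (x - 1)) * ennreal (g s))"
  proof
    fix s :: real
    show "f (0 + c * s) = ennreal (c powr (x - 1)) * ennreal (g s)"
    proof (cases "s > 0")
      case True
      then have "f (0 + c * s) = ennreal (c powr (x - 1) * g s)"
        using c by (simp add: f_def g_def powr_mult exp_minus field_simps)
      then show ?thesis
        using c by (simp add: ennreal_mult')
    qed (use c in \<open>auto simp: f_def g_def indicator_def zero_le_mult_iff not_less\<close>)
  qed
  also have "(\<integral>\<^sup>+s. ennreal (c powr (x - 1)) * ennreal (g s) \<partial>lborel)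
             = c powr (x - 1) * integral\<^sup>N lborel g"
    by (rule nn_integral_cmult) (simp add: g_def)
  finally have "ennreal (Gamma x) = ennreal (c powr x) * integral\<^sup>N lborel g"
    using c by (simp add: ennreal_mult'[symmetric] mult.assoc[symmetric] powr_mult_base)
  then have "integral\<^sup>N lborel g = ennreal (1 / c powr x) * ennreal (Gamma x)"
    using c by (simp add: mult.assoc[symmetric] ennreal_mult'[symmetric])
  then have "integral\<^sup>N lborel g = ennreal (Gamma x / c powr x)"
    using c x by (simp add: ennreal_mult'[symmetric] Gamma_real_pos less_imp_le)
  then show ?thesis unfolding g_def[symmetric]
    by (intro has_bochner_integral_nn_integral) (auto simp: g_def Gamma_real_pos less_imp_le x)
qed

lemma integrable_powr_exp:
  fixes p c :: real
  assumes "p > -1" "c > 0"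
  shows "integrable lborel (\<lambda>t. indicator {0<..} t * (t powr p * exp (- c * t)))"
  using has_bochner_integral_powr_exp[of "p + 1" c] assms by (simp add: integrable.intros)

lemma has_field_derivative_Gamma_div_powr:
  fixes x c :: real
  assumes x: "x \<notin> \<int>\<^sub>\<le>\<^sub>0" and c: "c > 0"
  shows "((\<lambda>y. Gamma y / c powr y) has_field_derivative Gamma x * (Digamma x - ln c) / c powr x) (at x)"
proof -
  have "((\<lambda>y. Gamma y / exp (y * ln c)) has_field_derivative
          (Gamma x * Digamma x * exp (x * ln c) - Gamma x * (exp (x * ln c) * ln c))
            / (exp (x * ln c) * exp (x * ln c))) (at x)"
    by (intro DERIV_divide has_field_derivative_Gamma[OF x]) (auto intro!: derivative_eq_intros)
  also have "(Gamma x * Digamma x * exp (x * ln c) - Gamma x * (exp (x * ln c) * ln c))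
            / (exp (x * ln c) * exp (x * ln c)) = Gamma x * (Digamma x - ln c) / c powr x"
    using c by (simp add: powr_def field_simps)
  also have "(\<lambda>y. Gamma y / exp (y * ln c)) = (\<lambda>y. Gamma y / c powr y)"
    using c by (simp add: powr_def)
  finally show ?thesis .
qed

lemma has_bochner_integral_powr_difference_quotient_exp:
  fixes x c h :: real
  assumes x: "x > 0" and c: "c > 0" and h: "h > 0"
  shows "has_bochner_integral lborel
           (\<lambda>t. indicator {0<..} t * (t powr (x - 1) * ((t powr h - 1) / h) * exp (- c * t)))
           ((Gamma (x + h) / c powr (x + h) - Gamma x / c powr x) / h)"
proof -
  have "t powr (x + h - 1) = t powr (x - 1) * t powr h" for t
    by (subst powr_add[symmetric]) (simp add: algebra_simps)
  then have "(\<lambda>t. indicator {0<..} t * (t powr (x - 1) * ((t powr h - 1) / h) * exp (- c * t)))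
      = (\<lambda>t. (indicator {0<..} t * (t powr (x + h - 1) * exp (- c * t))
              - indicator {0<..} t * (t powr (x - 1) * exp (- c * t))) / h)"
    by (auto simp: fun_eq_iff algebra_simps diff_divide_distrib)
  then show ?thesis
    using x c h
    by (simp only:) (intro has_bochner_integral_divide_zero has_bochner_integral_diff
        has_bochner_integral_powr_exp; simp)
qed

text \<open>The derivative of \<^term>\<open>\<lambda>y. Gamma y / c powr y\<close> at \<open>x\<close>, taken under the integral
  sign; the bound \<open>x > 1/2\<close> is what makes the dominating function integrable.\<close>

lemma has_bochner_integral_ln_powr_exp:
  fixes x c :: real
  assumes x: "x > 1/2" and c: "c > 0"
  shows "has_bochner_integral lborel
           (\<lambda>t. indicator {0<..} t * (ln t * t powr (x - 1) * exp (- c * t)))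
           (Gamma x * (Digamma x - ln c) / c powr x)"
proof -
  define h where "h k = 1 / real (Suc k)" for k
  define f where "f t = indicator {0<..} t * (ln t * t powr (x - 1) * exp (- c * t))" for t
  define q where "q k t = indicator {0<..} t * (t powr (x - 1) * ((t powr h k - 1) / h k) * exp (- c * t))"
    for k t
  define w where "w t = indicator {0<..} t *
    (2 * t powr (x - 3/2) + 2 * t powr (x - 1/2) + t powr x + t powr (x + 1)) * exp (- c * t)" for t
  have h: "0 < h k" "h k \<le> 1" for k
    by (auto simp: h_def)
  have q_lim: "(\<lambda>k. q k t) \<longlonglongrightarrow> f t" for t
  proof (cases "t > 0")
    case True
    have "((\<lambda>y. t powr y) has_field_derivative ln t) (at 0)"
      using DERIV_powr[of "\<lambda>_. t" 0 0 "\<lambda>y. y" 1] True by simp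
    from difference_quotient_LIMSEQ[OF this] have "(\<lambda>k. (t powr h k - 1) / h k) \<longlonglongrightarrow> ln t"
      using True by (simp add: h_def)
    then have "(\<lambda>k. q k t) \<longlonglongrightarrow> indicator {0<..} t * (t powr (x - 1) * ln t * exp (- c * t))"
      unfolding q_def by (intro tendsto_intros)
    then show ?thesis
      by (simp add: f_def mult_ac)
  qed (simp add: q_def f_def)
  have q_bound: "\<bar>q k t\<bar> \<le> w t" for k t
  proof (cases "t > 0")
    case True
    from mult_right_mono[OF powr_mult_abs_powr_difference_quotient_le[OF True h(1,2)[of k]]]
    show ?thesis
      using True by (simp add: q_def w_def abs_mult mult_ac)
  qed (simp add: q_def w_def)
  have w_integrable: "integrable lborel w"
    using integrable_powr_exp[OF _ c, of "x - 3/2"] integrable_powr_exp[OF _ c, of "x - 1/2"]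
      integrable_powr_exp[OF _ c, of x] integrable_powr_exp[OF _ c, of "x + 1"] x
    unfolding w_def[abs_def] by (simp add: algebra_simps)
  have [measurable]: "f \<in> borel_measurable lborel" "q k \<in> borel_measurable lborel" for k
    unfolding f_def q_def by measurable
  have "integrable lborel f"
    by (rule integrable_dominated_convergence[OF _ _ w_integrable]) (auto intro: q_lim q_bound)
  moreover have "(\<lambda>k. integral\<^sup>L lborel (q k)) \<longlonglongrightarrow> integral\<^sup>L lborel f"
    by (rule integral_dominated_convergence[OF _ _ w_integrable]) (auto intro: q_lim q_bound)
  moreover have "(\<lambda>k. integral\<^sup>L lborel (q k)) \<longlonglongrightarrow> Gamma x * (Digamma x - ln c) / c powr x"
    using has_bochner_integral_integral_eq[OF has_bochner_integral_powr_difference_quotient_exp[OF _ c h(1)]]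
      difference_quotient_LIMSEQ[OF has_field_derivative_Gamma_div_powr[OF _ c]] x
    by (simp add: q_def[abs_def] h_def nonpos_Ints_def)
  ultimately show ?thesis
    using LIMSEQ_unique by (auto simp: has_bochner_integral_iff f_def[abs_def])
qed

lemma has_bochner_integral_ln_power_exp:
  fixes c :: real
  assumes c: "c > 0"
  shows "has_bochner_integral lborel (\<lambda>t. indicator {0<..} t * (ln t * t ^ n * exp (- c * t)))
           (Gamma (real (n + 1)) * (Digamma (real (n + 1)) - ln c) / c ^ (n + 1))"
proof -
  have "has_bochner_integral lborel
          (\<lambda>t. indicator {0<..} t * (ln t * t powr (real (n + 1) - 1) * exp (- c * t)))
          (Gamma (real (n + 1)) * (Digamma (real (n + 1)) - ln c) / c powr real (n + 1))"
    by (rule has_bochner_integral_ln_powr_exp) (use c in auto)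
  moreover have "(\<lambda>t. indicator {0<..} t * (ln t * t powr (real (n + 1) - 1) * exp (- c * t)))
        = (\<lambda>t::real. indicator {0<..} t * (ln t * t ^ n * exp (- c * t)))"
    by (auto simp: fun_eq_iff powr_realpow indicator_def)
  ultimately show ?thesis
    by (simp only: powr_realpow[OF c])
qed

lemma has_bochner_integral_ln_mult_neg_deriv_power_exp:
  fixes c :: real
  assumes c: "c > 0"
  shows "has_bochner_integral lborel
           (\<lambda>y. indicator {0<..} y * ((c * y ^ k - real k * y ^ (k - 1)) * exp (- c * y) * ln y))
           ((Gamma (real (k + 1)) * (Digamma (real (k + 1)) - ln c)
             - (if k = 0 then 0 else real k * Gamma (real k) * (Digamma (real k) - ln c))) / c ^ k)"
proof (cases k)
  case 0
  then show ?thesis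
    using has_bochner_integral_mult_right[OF has_bochner_integral_ln_power_exp[OF c, of 0], of c] c
    by (simp add: mult_ac)
next
  case (Suc m)
  have "has_bochner_integral lborel
     (\<lambda>y. c * (indicator {0<..} y * (ln y * y ^ k * exp (- c * y)))
          - real k * (indicator {0<..} y * (ln y * y ^ m * exp (- c * y))))
     (c * (Gamma (real (k + 1)) * (Digamma (real (k + 1)) - ln c) / c ^ (k + 1))
      - real k * (Gamma (real (m + 1)) * (Digamma (real (m + 1)) - ln c) / c ^ (m + 1)))"
    using has_bochner_integral_ln_power_exp[OF c, of k] has_bochner_integral_ln_power_exp[OF c, of m]
    by (intro has_bochner_integral_diff has_bochner_integral_mult_right) blast+
  moreover have "(\<lambda>y. c * (indicator {0<..} y * (ln y * y ^ k * exp (- c * y)))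
          - real k * (indicator {0<..} y * (ln y * y ^ m * exp (- c * y))))
      = (\<lambda>y. indicator {0<..} y * ((c * y ^ k - real k * y ^ (k - 1)) * exp (- c * y) * ln y))"
    using Suc by (auto simp: fun_eq_iff algebra_simps)
  moreover have "c * (Gamma (real (k + 1)) * (Digamma (real (k + 1)) - ln c) / c ^ (k + 1))
      - real k * (Gamma (real (m + 1)) * (Digamma (real (m + 1)) - ln c) / c ^ (m + 1))
      = (Gamma (real (k + 1)) * (Digamma (real (k + 1)) - ln c)
         - real k * Gamma (real k) * (Digamma (real k) - ln c)) / c ^ k"
    using Suc c by (simp add: field_simps del: of_nat_Suc)
  ultimately show ?thesis
    using Suc by simp
qed

section \<open>The minimum of two independent Erlang variables\<close>

definition erlang_tail :: "nat \<Rightarrow> real \<Rightarrow> real \<Rightarrow> real" where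
  "erlang_tail k l y = (\<Sum>n\<le>k. (l * y) ^ n * exp (- l * y) / fact n)"

lemma erlang_tail_eq: "0 \<le> y \<Longrightarrow> erlang_tail k l y = 1 - erlang_CDF k l y"
  by (simp add: erlang_CDF_def erlang_tail_def)

lemma erlang_tail_0 [simp]: "erlang_tail k l 0 = 1"
  by (simp add: erlang_tail_def power_0_left sum.atMost_shift)

lemma erlang_tail_nonneg: "0 \<le> l \<Longrightarrow> 0 \<le> y \<Longrightarrow> 0 \<le> erlang_tail k l y"
  unfolding erlang_tail_def by (intro sum_nonneg) auto

lemma has_field_derivative_erlang_tail:
  "(erlang_tail k l has_field_derivative - (l ^ Suc k * y ^ k * exp (- l * y) / fact k)) (at y)"
proof (induction k)
  case 0
  show ?case
    unfolding erlang_tail_def by (auto intro!: derivative_eq_intros)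
next
  case (Suc k)
  have "erlang_tail (Suc k) l = (\<lambda>y. erlang_tail k l y + (l * y) ^ Suc k * exp (- l * y) / fact (Suc k))"
    by (auto simp: erlang_tail_def)
  moreover have "((\<lambda>y. (l * y) ^ Suc k * exp (- l * y) / fact (Suc k)) has_field_derivative
      (real (Suc k) * (l * y) ^ k * l * exp (- l * y) + (l * y) ^ Suc k * (exp (- l * y) * (- l)))
        / fact (Suc k)) (at y)"
    by (auto intro!: derivative_eq_intros simp del: fact_Suc power_Suc)
  ultimately have "(erlang_tail (Suc k) l has_field_derivative - (l ^ Suc k * y ^ k * exp (- l * y) / fact k)
      + (real (Suc k) * (l * y) ^ k * l * exp (- l * y) + (l * y) ^ Suc k * (exp (- l * y) * (- l)))
        / fact (Suc k)) (at y)"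
    using Suc.IH by (simp only: DERIV_add)
  also have "- (l ^ Suc k * y ^ k * exp (- l * y) / fact k)
      + (real (Suc k) * (l * y) ^ k * l * exp (- l * y) + (l * y) ^ Suc k * (exp (- l * y) * (- l)))
        / fact (Suc k)
      = - (l ^ Suc (Suc k) * y ^ Suc k * exp (- l * y) / fact (Suc k))"
    by (simp add: field_simps power_mult_distrib del: fact_Suc) (simp add: algebra_simps)
  finally show ?case .
qed

lemma erlang_tail_mult_erlang_tail:
  "erlang_tail kA a y * erlang_tail kB b y
     = (\<Sum>\<mu>\<le>kA. \<Sum>\<nu>\<le>kB. a ^ \<mu> * b ^ \<nu> / (fact \<mu> * fact \<nu>) * y ^ (\<mu> + \<nu>) * exp (- (a + b) * y))"
  unfolding erlang_tail_def sum_product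
proof (intro sum.cong refl)
  fix \<mu> \<nu>
  have "exp (- (a + b) * y) = exp (- a * y) * exp (- b * y)"
    by (simp add: exp_add[symmetric] algebra_simps)
  then show "(a * y) ^ \<mu> * exp (- a * y) / fact \<mu> * ((b * y) ^ \<nu> * exp (- b * y) / fact \<nu>)
      = a ^ \<mu> * b ^ \<nu> / (fact \<mu> * fact \<nu>) * y ^ (\<mu> + \<nu>) * exp (- (a + b) * y)"
    by (simp add: power_mult_distrib power_add)
qed

definition min_erlang_density :: "nat \<Rightarrow> real \<Rightarrow> nat \<Rightarrow> real \<Rightarrow> real \<Rightarrow> real" where
  "min_erlang_density kA a kB b y = (if y < 0 then 0
     else erlang_density kA a y * erlang_tail kB b y + erlang_tail kA a y * erlang_density kB b y)"

lemma min_erlang_density_nonneg: "0 < a \<Longrightarrow> 0 < b \<Longrightarrow> 0 \<le> min_erlang_density kA a kB b y"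
  unfolding min_erlang_density_def by (auto intro!: add_nonneg_nonneg mult_nonneg_nonneg erlang_tail_nonneg)

lemma borel_measurable_min_erlang_density [measurable]:
  "min_erlang_density kA a kB b \<in> borel_measurable borel"
  unfolding min_erlang_density_def erlang_tail_def by measurable

lemma has_field_derivative_erlang_tail_mult_erlang_tail:
  assumes "0 \<le> y"
  shows "((\<lambda>y. erlang_tail kA a y * erlang_tail kB b y) has_field_derivative
           - min_erlang_density kA a kB b y) (at y)"
  using DERIV_mult[OF has_field_derivative_erlang_tail has_field_derivative_erlang_tail] assms
  by (simp add: min_erlang_density_def erlang_density_def algebra_simps)

lemma min_erlang_density_eq_sum:
  assumes "0 \<le> y"
  shows "min_erlang_density kA a kB b y = (\<Sum>\<mu>\<le>kA. \<Sum>\<nu>\<le>kB. a ^ \<mu> * b ^ \<nu> / (fact \<mu> * fact \<nu>)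
           * ((a + b) * y ^ (\<mu> + \<nu>) - real (\<mu> + \<nu>) * y ^ (\<mu> + \<nu> - 1)) * exp (- (a + b) * y))"
proof -
  have "((\<lambda>y. erlang_tail kA a y * erlang_tail kB b y) has_field_derivative
          (\<Sum>\<mu>\<le>kA. \<Sum>\<nu>\<le>kB. a ^ \<mu> * b ^ \<nu> / (fact \<mu> * fact \<nu>)
             * (real (\<mu> + \<nu>) * y ^ (\<mu> + \<nu> - 1) * exp (- (a + b) * y)
                + y ^ (\<mu> + \<nu>) * (exp (- (a + b) * y) * - (a + b))))) (at y)"
    unfolding erlang_tail_mult_erlang_tail
    by (intro DERIV_sum) (auto intro!: derivative_eq_intros simp: mult.assoc)
  from DERIV_unique[OF has_field_derivative_erlang_tail_mult_erlang_tail[OF assms] this]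
  have "min_erlang_density kA a kB b y = (\<Sum>\<mu>\<le>kA. \<Sum>\<nu>\<le>kB. - (a ^ \<mu> * b ^ \<nu> / (fact \<mu> * fact \<nu>)
             * (real (\<mu> + \<nu>) * y ^ (\<mu> + \<nu> - 1) * exp (- (a + b) * y)
                + y ^ (\<mu> + \<nu>) * (exp (- (a + b) * y) * - (a + b)))))"
    by (simp add: sum_negf)
  also have "\<dots> = (\<Sum>\<mu>\<le>kA. \<Sum>\<nu>\<le>kB. a ^ \<mu> * b ^ \<nu> / (fact \<mu> * fact \<nu>)
           * ((a + b) * y ^ (\<mu> + \<nu>) - real (\<mu> + \<nu>) * y ^ (\<mu> + \<nu> - 1)) * exp (- (a + b) * y))"
    by (intro sum.cong refl) (simp add: algebra_simps)
  finally show ?thesis .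
qed

lemma (in prob_space) erlang_distributed_gt':
  assumes D: "distributed M lborel X (erlang_density k l)" and l: "0 < l"
  shows "\<P>(x in M. a < X x) = 1 - erlang_CDF k l a"
proof (cases "0 \<le> a")
  case True
  then show ?thesis
    using erlang_distributed_gt[OF D l] by simp
next
  case False
  have [measurable]: "X \<in> borel_measurable M"
    using distributed_measurable[OF D] by simp
  have "\<P>(x in M. 0 < X x) \<le> \<P>(x in M. a < X x)"
    using False by (intro finite_measure_mono) auto
  moreover have "erlang_CDF k l a = 0"
    using False by (simp add: erlang_CDF_def)
  ultimately show ?thesis
    using erlang_distributed_gt[OF D l order_refl] prob_le_1[of "{x \<in> space M. a < X x}"]
    by (simp add: erlang_CDF_at0)
qed

lemma (in prob_space) AE_erlang_distributed_nonneg: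
  assumes "distributed M lborel X (erlang_density k l)"
  shows "AE x in M. 0 \<le> X x"
  using distributed_AE2[OF assms, of "\<lambda>x. 0 \<le> x"] by (simp add: erlang_density_def)

lemma nn_integral_min_erlang_density_atMost:
  assumes a: "0 < a" and b: "0 < b"
  shows "(\<integral>\<^sup>+x. ennreal (min_erlang_density kA a kB b x * indicator {..z} x) \<partial>lborel)
           = ennreal (1 - (1 - erlang_CDF kA a z) * (1 - erlang_CDF kB b z))"
proof (cases "z < 0")
  case True
  then have "(\<lambda>x. ennreal (min_erlang_density kA a kB b x * indicator {..z} x)) = (\<lambda>_. 0)"
    by (auto simp: fun_eq_iff min_erlang_density_def indicator_def)
  then show ?thesis
    using True by (simp add: erlang_CDF_def)
next
  case False
  have "(\<integral>\<^sup>+x. ennreal (min_erlang_density kA a kB b x * indicator {..z} x) \<partial>lborel)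
      = (\<integral>\<^sup>+x. ennreal (min_erlang_density kA a kB b x) * indicator {0..z} x \<partial>lborel)"
    by (intro nn_integral_cong) (auto simp: min_erlang_density_def indicator_def)
  also have "\<dots> = (- erlang_tail kA a z * erlang_tail kB b z) - (- erlang_tail kA a 0 * erlang_tail kB b 0)"
    using False DERIV_minus[OF has_field_derivative_erlang_tail_mult_erlang_tail]
    by (intro nn_integral_FTC_Icc) (auto simp: min_erlang_density_nonneg a b)
  finally show ?thesis
    using False by (simp add: erlang_tail_eq algebra_simps)
qed

lemma (in prob_space) distributed_min_erlang:
  assumes U: "distributed M lborel U (erlang_density kA a)"
    and V: "distributed M lborel V (erlang_density kB b)"
    and a: "0 < a" and b: "0 < b" and indep: "indep_var borel U borel V"
  shows "distributed M lborel (\<lambda>\<omega>. min (U \<omega>) (V \<omega>)) (min_erlang_density kA a kB b)"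
proof (rule distributedI_borel_atMost[OF _ _ _ nn_integral_min_erlang_density_atMost[OF a b]])
  have [measurable]: "U \<in> borel_measurable M" "V \<in> borel_measurable M"
    using distributed_measurable[OF U] distributed_measurable[OF V] by simp_all
  show "(\<lambda>\<omega>. min (U \<omega>) (V \<omega>)) \<in> borel_measurable M"
    by measurable
  show "AE x in lborel. 0 \<le> min_erlang_density kA a kB b x"
    using min_erlang_density_nonneg[OF a b] by simp
  fix z :: real
  have "\<P>(x in M. z < min (U x) (V x)) = \<P>(x in M. U x \<in> {z<..} \<and> V x \<in> {z<..})"
    by (auto intro!: arg_cong[where f = prob])
  also have "\<dots> = \<P>(x in M. z < U x) * \<P>(x in M. z < V x)"
    using prob_indep_random_variable[OF indep, of "{z<..}" "{z<..}"] by simp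
  finally have "\<P>(x in M. z < min (U x) (V x)) = (1 - erlang_CDF kA a z) * (1 - erlang_CDF kB b z)"
    using erlang_distributed_gt'[OF U a] erlang_distributed_gt'[OF V b] by simp
  moreover have "{x \<in> space M. min (U x) (V x) \<le> z} = space M - {x \<in> space M. z < min (U x) (V x)}"
    by auto
  ultimately show "emeasure M {x \<in> space M. min (U x) (V x) \<le> z}
      = ennreal (1 - (1 - erlang_CDF kA a z) * (1 - erlang_CDF kB b z))"
    by (simp add: emeasure_eq_measure prob_compl)
qed measurable

definition expected_ln_min_erlang :: "nat \<Rightarrow> real \<Rightarrow> nat \<Rightarrow> real \<Rightarrow> real" where
  "expected_ln_min_erlang kA a kB b = (\<Sum>\<mu>\<le>kA. \<Sum>\<nu>\<le>kB.
     a ^ \<mu> * b ^ \<nu> / (fact \<mu> * fact \<nu> * (a + b) ^ (\<mu> + \<nu>)) *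
       (Gamma (real (\<mu> + \<nu> + 1)) * (Digamma (real (\<mu> + \<nu> + 1)) - ln (a + b))
        - (if \<mu> + \<nu> = 0 then 0
           else real (\<mu> + \<nu>) * Gamma (real (\<mu> + \<nu>)) * (Digamma (real (\<mu> + \<nu>)) - ln (a + b)))))"

lemma has_bochner_integral_min_erlang_density_ln:
  assumes a: "0 < a" and b: "0 < b"
  shows "has_bochner_integral lborel (\<lambda>y. min_erlang_density kA a kB b y * ln y)
           (expected_ln_min_erlang kA a kB b)"
proof -
  have "min_erlang_density kA a kB b y * ln y = (\<Sum>\<mu>\<le>kA. \<Sum>\<nu>\<le>kB. a ^ \<mu> * b ^ \<nu> / (fact \<mu> * fact \<nu>) *
          (indicator {0<..} y * (((a + b) * y ^ (\<mu> + \<nu>) - real (\<mu> + \<nu>) * y ^ (\<mu> + \<nu> - 1))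
                                  * exp (- (a + b) * y) * ln y)))" for y
  proof (cases "y > 0")
    case True
    then show ?thesis
      by (simp add: min_erlang_density_eq_sum sum_distrib_left sum_distrib_right mult_ac)
  qed (simp add: min_erlang_density_def)
  moreover have "has_bochner_integral lborel
     (\<lambda>y. \<Sum>\<mu>\<le>kA. \<Sum>\<nu>\<le>kB. a ^ \<mu> * b ^ \<nu> / (fact \<mu> * fact \<nu>) *
          (indicator {0<..} y * (((a + b) * y ^ (\<mu> + \<nu>) - real (\<mu> + \<nu>) * y ^ (\<mu> + \<nu> - 1))
                                  * exp (- (a + b) * y) * ln y)))
     (\<Sum>\<mu>\<le>kA. \<Sum>\<nu>\<le>kB. a ^ \<mu> * b ^ \<nu> / (fact \<mu> * fact \<nu>) *
       ((Gamma (real (\<mu> + \<nu> + 1)) * (Digamma (real (\<mu> + \<nu> + 1)) - ln (a + b))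
        - (if \<mu> + \<nu> = 0 then 0
           else real (\<mu> + \<nu>) * Gamma (real (\<mu> + \<nu>)) * (Digamma (real (\<mu> + \<nu>)) - ln (a + b))))
        / (a + b) ^ (\<mu> + \<nu>)))"
    using a b
    by (intro has_bochner_integral_sum has_bochner_integral_mult_right
        has_bochner_integral_ln_mult_neg_deriv_power_exp) simp
  ultimately show ?thesis
    by (simp add: expected_ln_min_erlang_def)
qed

section \<open>High-SNR behaviour of ergodic rates\<close>

lemma abs_ln_inverse_add_le:
  fixes \<rho> y :: real
  assumes \<rho>: "1 \<le> \<rho>" and y: "0 < y"
  shows "\<bar>ln (1 / \<rho> + y)\<bar> \<le> \<bar>ln y\<bar> + y"
proof -
  have "ln y \<le> ln (1 / \<rho> + y)" "ln (1 / \<rho> + y) \<le> ln (1 + y)"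
    using \<rho> y by (intro ln_mono; simp add: add_pos_pos)+
  moreover have "ln (1 + y) \<le> y"
    using y by (intro ln_add_one_self_le_self) simp
  ultimately show ?thesis
    using y by linarith
qed

lemma (in prob_space) tendsto_integral_ln_inverse_add:
  fixes Y :: "'a \<Rightarrow> real"
  assumes [measurable]: "Y \<in> borel_measurable M"
    and pos: "AE \<omega> in M. 0 < Y \<omega>" and "integrable M Y" and "integrable M (\<lambda>\<omega>. ln (Y \<omega>))"
  shows "((\<lambda>\<rho>. \<integral>\<omega>. ln (1 / \<rho> + Y \<omega>) \<partial>M) \<longlongrightarrow> \<integral>\<omega>. ln (Y \<omega>) \<partial>M) at_top"
proof (rule integral_dominated_convergence_at_top[where s = "\<lambda>\<rho> \<omega>. ln (1 / \<rho> + Y \<omega>)"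
      and f = "\<lambda>\<omega>. ln (Y \<omega>)" and w = "\<lambda>\<omega>. \<bar>ln (Y \<omega>)\<bar> + Y \<omega>"])
  show "\<forall>\<^sub>F \<rho> in at_top. AE \<omega> in M. norm (ln (1 / \<rho> + Y \<omega>)) \<le> \<bar>ln (Y \<omega>)\<bar> + Y \<omega>"
    using eventually_ge_at_top[of 1]
  proof eventually_elim
    fix \<rho> :: real assume "1 \<le> \<rho>"
    show "AE \<omega> in M. norm (ln (1 / \<rho> + Y \<omega>)) \<le> \<bar>ln (Y \<omega>)\<bar> + Y \<omega>"
      using pos by eventually_elim (simp add: abs_ln_inverse_add_le[OF \<open>1 \<le> \<rho>\<close>])
  qed
  have inverse: "((\<lambda>\<rho>::real. 1 / \<rho>) \<longlongrightarrow> 0) at_top"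
    using tendsto_inverse_0_at_top[OF filterlim_ident] by (simp add: inverse_eq_divide)
  show "AE \<omega> in M. ((\<lambda>\<rho>. ln (1 / \<rho> + Y \<omega>)) \<longlongrightarrow> ln (Y \<omega>)) at_top"
    using pos
  proof eventually_elim
    fix \<omega> assume "0 < Y \<omega>"
    with tendsto_add[OF inverse tendsto_const[of "Y \<omega>"]]
    show "((\<lambda>\<rho>. ln (1 / \<rho> + Y \<omega>)) \<longlongrightarrow> ln (Y \<omega>)) at_top"
      by (auto dest: tendsto_ln)
  qed
  show "integrable M (\<lambda>\<omega>. \<bar>ln (Y \<omega>)\<bar> + Y \<omega>)"
    by (rule Bochner_Integration.integrable_add[OF integrable_abs[OF assms(4)] assms(3)])
  show "(\<lambda>\<omega>. ln (Y \<omega>)) \<in> borel_measurable M"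
    by measurable
  show "(\<lambda>\<omega>. ln (1 / \<rho> + Y \<omega>)) \<in> borel_measurable M" for \<rho>
    by measurable
qed

lemma (in prob_space) tendsto_integral_log_one_plus_mult_minus_log:
  fixes Y :: "'a \<Rightarrow> real"
  assumes [measurable]: "Y \<in> borel_measurable M"
    and pos: "AE \<omega> in M. 0 < Y \<omega>" and "integrable M Y" and "integrable M (\<lambda>\<omega>. ln (Y \<omega>))"
  shows "((\<lambda>\<rho>. (\<integral>\<omega>. log 2 (1 + \<rho> * Y \<omega>) \<partial>M) - log 2 \<rho>) \<longlongrightarrow> (\<integral>\<omega>. ln (Y \<omega>) \<partial>M) / ln 2) at_top"
proof -
  have "\<forall>\<^sub>F \<rho> in at_top. (\<integral>\<omega>. ln (1 / \<rho> + Y \<omega>) \<partial>M) / ln 2 = (\<integral>\<omega>. log 2 (1 + \<rho> * Y \<omega>) \<partial>M) - log 2 \<rho>"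
    using eventually_ge_at_top[of 1]
  proof eventually_elim
    fix \<rho> :: real assume \<rho>: "1 \<le> \<rho>"
    have "integrable M (\<lambda>\<omega>. ln (1 / \<rho> + Y \<omega>))"
    proof (rule Bochner_Integration.integrable_bound)
      show "integrable M (\<lambda>\<omega>. \<bar>ln (Y \<omega>)\<bar> + Y \<omega>)"
        by (rule Bochner_Integration.integrable_add[OF integrable_abs[OF assms(4)] assms(3)])
      show "AE \<omega> in M. norm (ln (1 / \<rho> + Y \<omega>)) \<le> norm (\<bar>ln (Y \<omega>)\<bar> + Y \<omega>)"
        using pos by eventually_elim (simp add: abs_ln_inverse_add_le[OF \<rho>])
    qed measurable
    moreover have "AE \<omega> in M. log 2 (1 + \<rho> * Y \<omega>) = log 2 \<rho> + ln (1 / \<rho> + Y \<omega>) / ln 2"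
      using pos
    proof eventually_elim
      fix \<omega> assume "0 < Y \<omega>"
      then have "1 + \<rho> * Y \<omega> = \<rho> * (1 / \<rho> + Y \<omega>)" "0 < 1 / \<rho> + Y \<omega>"
        using \<rho> by (simp_all add: field_simps add_pos_pos)
      then show "log 2 (1 + \<rho> * Y \<omega>) = log 2 \<rho> + ln (1 / \<rho> + Y \<omega>) / ln 2"
        using \<rho> by (simp add: log_def ln_mult add_divide_distrib)
    qed
    ultimately show "(\<integral>\<omega>. ln (1 / \<rho> + Y \<omega>) \<partial>M) / ln 2 = (\<integral>\<omega>. log 2 (1 + \<rho> * Y \<omega>) \<partial>M) - log 2 \<rho>"
      by (subst integral_cong_AE[where g = "\<lambda>\<omega>. log 2 \<rho> + ln (1 / \<rho> + Y \<omega>) / ln 2"]) (auto simp: prob_space)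
  qed
  with tendsto_divide[OF tendsto_integral_ln_inverse_add[OF assms] tendsto_const[of "ln 2"]]
  show ?thesis
    by (auto elim: Lim_transform_eventually)
qed

lemma (in prob_space) tendsto_integral_log_min_erlang:
  assumes U: "distributed M lborel U (erlang_density kA a)"
    and V: "distributed M lborel V (erlang_density kB b)"
    and a: "0 < a" and b: "0 < b" and indep: "indep_var borel U borel V"
  shows "((\<lambda>\<rho>. (\<integral>\<omega>. log 2 (1 + \<rho> * min (U \<omega>) (V \<omega>)) \<partial>M) - log 2 \<rho>)
           \<longlongrightarrow> expected_ln_min_erlang kA a kB b / ln 2) at_top"
proof -
  define Y where "Y \<omega> = min (U \<omega>) (V \<omega>)" for \<omega>
  have Y: "distributed M lborel Y (min_erlang_density kA a kB b)"
    unfolding Y_def[abs_def] by (rule distributed_min_erlang[OF U V a b indep])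
  have [measurable]: "Y \<in> borel_measurable M" "V \<in> borel_measurable M"
    using distributed_measurable[OF Y] distributed_measurable[OF V] by simp_all
  have ln_density: "has_bochner_integral lborel (\<lambda>y. min_erlang_density kA a kB b y * ln y)
                      (expected_ln_min_erlang kA a kB b)"
    by (rule has_bochner_integral_min_erlang_density_ln[OF a b])
  have "AE \<omega> in M. 0 < Y \<omega>"
    using AE_lborel_singleton[of 0]
    by (subst distributed_AE2[OF Y]) (auto simp: min_erlang_density_def elim!: eventually_mono)
  moreover have "integrable M Y"
  proof (rule Bochner_Integration.integrable_bound)
    show "integrable M V"
      using erlang_ith_moment_integrable[OF b V, of 1] by simp
    show "AE \<omega> in M. norm (Y \<omega>) \<le> norm (V \<omega>)"
      using \<open>AE \<omega> in M. 0 < Y \<omega>\<close> by eventually_elim (auto simp: Y_def)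
  qed simp
  moreover have "integrable M (\<lambda>\<omega>. ln (Y \<omega>))"
    using distributed_integrable[OF Y, of ln] min_erlang_density_nonneg[OF a b]
      integrable.intros[OF ln_density] by simp
  moreover have "(\<integral>\<omega>. ln (Y \<omega>) \<partial>M) = expected_ln_min_erlang kA a kB b"
    using distributed_integral[OF Y, of ln] min_erlang_density_nonneg[OF a b]
      has_bochner_integral_integral_eq[OF ln_density] by simp
  ultimately show ?thesis
    using tendsto_integral_log_one_plus_mult_minus_log[of Y] by (simp add: Y_def)
qed

lemma (in prob_space) abs_integral_log_one_plus_sinr_le:
  assumes [measurable]: "X \<in> borel_measurable M"
    and X: "AE \<omega> in M. 0 \<le> X \<omega>" and a1: "0 < a1" and a2: "0 < a2" and \<rho>: "0 \<le> \<rho>"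
  shows "\<bar>\<integral>\<omega>. log 2 (1 + a1 * \<rho> * X \<omega> / (a2 * \<rho> * X \<omega> + 1)) \<partial>M\<bar> \<le> log 2 (1 + a1 / a2)"
proof -
  define h where "h \<omega> = log 2 (1 + a1 * \<rho> * X \<omega> / (a2 * \<rho> * X \<omega> + 1))" for \<omega>
  have [measurable]: "h \<in> borel_measurable M"
    unfolding h_def by measurable
  have bounds: "AE \<omega> in M. 0 \<le> h \<omega> \<and> h \<omega> \<le> log 2 (1 + a1 / a2)"
    using X
  proof eventually_elim
    fix \<omega> assume "0 \<le> X \<omega>"
    define q where "q = a1 * \<rho> * X \<omega> / (a2 * \<rho> * X \<omega> + 1)"
    have "0 < a2 * \<rho> * X \<omega> + 1" "0 \<le> a1 * \<rho> * X \<omega>"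
      using \<open>0 \<le> X \<omega>\<close> a1 a2 \<rho> by (simp_all add: add_nonneg_pos)
    then have "0 \<le> q" "q \<le> a1 / a2"
      using a1 a2 by (simp_all add: q_def field_simps)
    then have "log 2 1 \<le> log 2 (1 + q)" "log 2 (1 + q) \<le> log 2 (1 + a1 / a2)"
      by (intro log_mono; simp)+
    then show "0 \<le> h \<omega> \<and> h \<omega> \<le> log 2 (1 + a1 / a2)"
      by (simp add: h_def q_def)
  qed
  have "integrable M h"
    by (rule Bochner_Integration.integrable_bound[of _ "\<lambda>_. log 2 (1 + a1 / a2)"]) (use bounds in auto)
  then have "integral\<^sup>L M h \<le> (\<integral>\<omega>. log 2 (1 + a1 / a2) \<partial>M)"
    using bounds by (intro integral_mono_AE) auto
  moreover have "0 \<le> integral\<^sup>L M h"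
    using bounds by (intro integral_nonneg_AE) auto
  ultimately show ?thesis
    by (simp add: h_def[abs_def] prob_space)
qed

lemma (in prob_space) integral_log_one_plus_sinr_bigo:
  assumes "X \<in> borel_measurable M" "AE \<omega> in M. 0 \<le> X \<omega>" "0 < a1" "0 < a2"
  shows "(\<lambda>\<rho>. \<integral>\<omega>. log 2 (1 + a1 * \<rho> * X \<omega> / (a2 * \<rho> * X \<omega> + 1)) \<partial>M) \<in> O[at_top](\<lambda>_. 1)"
  using abs_integral_log_one_plus_sinr_le[OF assms]
  by (intro bigoI[of _ "log 2 (1 + a1 / a2)"]) (auto intro: eventually_ge_at_top[THEN eventually_mono])

lemma expected_ln_min_erlang_fading:
  fixes msr mrd n1 n2 :: nat and \<Omega>sr \<Omega>rd a2 :: real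
  assumes "0 < n1" "0 < n2"
  defines "\<Xi> \<equiv> real msr / (\<Omega>sr * a2) + real mrd / \<Omega>rd"
  shows "expected_ln_min_erlang (n1 - 1) (real msr / \<Omega>sr / a2) (n2 - 1) (real mrd / \<Omega>rd)
    = (\<Sum>\<mu><n1. \<Sum>\<nu><n2. real msr ^ \<mu> * real mrd ^ \<nu> /
          (a2 ^ \<mu> * \<Omega>sr ^ \<mu> * \<Omega>rd ^ \<nu> * fact \<mu> * fact \<nu> * \<Xi> ^ (\<mu> + \<nu>)) *
        (Gamma (real (\<mu> + \<nu> + 1)) * (Digamma (real (\<mu> + \<nu> + 1)) - ln \<Xi>)
         - (if \<mu> + \<nu> = 0 then 0
            else real (\<mu> + \<nu>) * Gamma (real (\<mu> + \<nu>)) * (Digamma (real (\<mu> + \<nu>)) - ln \<Xi>))))"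
proof -
  have "{..<n1} = {..n1 - 1}" "{..<n2} = {..n2 - 1}"
    using assms(1,2) by (auto simp: lessThan_Suc_atMost[symmetric])
  moreover have \<Xi>: "real msr / \<Omega>sr / a2 + real mrd / \<Omega>rd = \<Xi>"
    by (simp add: \<Xi>_def)
  ultimately show ?thesis
    unfolding expected_ln_min_erlang_def \<Xi> by (simp add: power_divide power_mult_distrib mult_ac)
qed

section \<open>MRC gains under Nakagami-m fading\<close>

lemma gamma_pdf_eq_erlang_density:
  assumes m: "0 < m" and x: "x \<noteq> 0"
  shows "gamma_pdf m \<Omega> x = erlang_density (m - 1) (real m / \<Omega>) x"
proof -
  have "Gamma (real m) = fact (m - 1)"
    using Gamma_fact[of "m - 1"] m by (simp add: of_nat_diff)
  moreover have "Suc (m - 1) = m"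
    using m by simp
  ultimately show ?thesis
    using x by (auto simp: gamma_pdf_def erlang_density_def power_divide mult_ac)
qed

lemma (in prob_space) erlang_distributed_sum_gamma_pdf:
  assumes indep: "indep_vars (\<lambda>_. borel) X I" and f: "inj_on f J" "f ` J \<subseteq> I"
    and J: "finite J" "J \<noteq> {}" and m: "0 < m" and \<Omega>: "0 < \<Omega>"
    and X: "\<And>j. j \<in> J \<Longrightarrow> distributed M lborel (X (f j)) (\<lambda>x. ennreal (gamma_pdf m \<Omega> x))"
  shows "distributed M lborel (\<lambda>\<omega>. \<Sum>j\<in>J. X (f j) \<omega>) (erlang_density (m * card J - 1) (real m / \<Omega>))"
proof -
  have "distributed M lborel (X i) (erlang_density (m - 1) (real m / \<Omega>))" if "i \<in> f ` J" for i
  proof -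
    have "AE x in lborel. ennreal (gamma_pdf m \<Omega> x) = ennreal (erlang_density (m - 1) (real m / \<Omega>) x)"
      using AE_lborel_singleton[of 0] by eventually_elim (simp add: gamma_pdf_eq_erlang_density[OF m])
    with X that show ?thesis
      by (subst (asm) distributed_cong_density) (auto simp: gamma_pdf_def)
  qed
  from erlang_distributed_sum[OF _ _ _ this indep_vars_subset[OF indep f(2)]] J m \<Omega>
  show ?thesis
    by (simp add: sum.reindex[OF f(1)] card_image[OF f(1)] mult.commute)
qed

lemma (in prob_space) indep_var_sum_sum:
  fixes X :: "'i \<Rightarrow> 'a \<Rightarrow> real"
  assumes indep: "indep_vars (\<lambda>_. borel) X I" and AB: "A \<inter> B = {}" "A \<subseteq> I" "B \<subseteq> I"
  shows "indep_var borel (\<lambda>\<omega>. \<Sum>i\<in>A. X i \<omega>) borel (\<lambda>\<omega>. \<Sum>i\<in>B. X i \<omega>)"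
proof -
  have "indep_var
    borel ((\<lambda>f. \<Sum>i\<in>A. f i) \<circ> (\<lambda>\<omega>. restrict (\<lambda>i. X i \<omega>) A))
    borel ((\<lambda>f. \<Sum>i\<in>B. f i) \<circ> (\<lambda>\<omega>. restrict (\<lambda>i. X i \<omega>) B))"
    by (intro indep_var_compose[OF indep_var_restrict[OF indep AB]]) auto
  also have "(\<lambda>f. \<Sum>i\<in>A. f i) \<circ> (\<lambda>\<omega>. restrict (\<lambda>i. X i \<omega>) A) = (\<lambda>\<omega>. \<Sum>i\<in>A. X i \<omega>)"
    by auto
  also have "(\<lambda>f. \<Sum>i\<in>B. f i) \<circ> (\<lambda>\<omega>. restrict (\<lambda>i. X i \<omega>) B) = (\<lambda>\<omega>. \<Sum>i\<in>B. X i \<omega>)"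
    by auto
  finally show ?thesis .
qed

lemma (in prob_space) mrc_gains_distributed:
  assumes indep: "indep_vars (\<lambda>_. borel) (all_links Gsr Gsd Grd) (link_idx Nr Nd)"
    and N: "Nr > 0" "Nd > 0" and m: "msr > 0" "msd > 0" "mrd > 0"
    and \<Omega>: "\<Omega>sr > 0" "\<Omega>sd > 0" "\<Omega>rd > 0"
    and sr: "\<And>i. i \<in> {1..Nr} \<Longrightarrow> distributed M lborel (Gsr i) (\<lambda>x. ennreal (gamma_pdf msr \<Omega>sr x))"
    and sd: "\<And>j. j \<in> {1..Nd} \<Longrightarrow> distributed M lborel (Gsd j) (\<lambda>x. ennreal (gamma_pdf msd \<Omega>sd x))"
    and rd: "\<And>k. k \<in> {1..Nd} \<Longrightarrow> distributed M lborel (Grd k) (\<lambda>x. ennreal (gamma_pdf mrd \<Omega>rd x))"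
  shows "distributed M lborel (\<lambda>\<omega>. \<Sum>i=1..Nr. Gsr i \<omega>) (erlang_density (msr * Nr - 1) (real msr / \<Omega>sr))"
    and "distributed M lborel (\<lambda>\<omega>. \<Sum>j=1..Nd. Gsd j \<omega>) (erlang_density (msd * Nd - 1) (real msd / \<Omega>sd))"
    and "distributed M lborel (\<lambda>\<omega>. \<Sum>k=1..Nd. Grd k \<omega>) (erlang_density (mrd * Nd - 1) (real mrd / \<Omega>rd))"
    and "indep_var borel (\<lambda>\<omega>. \<Sum>i=1..Nr. Gsr i \<omega>) borel (\<lambda>\<omega>. \<Sum>k=1..Nd. Grd k \<omega>)"
proof -
  show "distributed M lborel (\<lambda>\<omega>. \<Sum>i=1..Nr. Gsr i \<omega>) (erlang_density (msr * Nr - 1) (real msr / \<Omega>sr))"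
    using erlang_distributed_sum_gamma_pdf[OF indep, of Inl "{1..Nr}"] N m \<Omega> sr
    by (simp add: all_links_def link_idx_def image_subset_iff)
  show "distributed M lborel (\<lambda>\<omega>. \<Sum>j=1..Nd. Gsd j \<omega>) (erlang_density (msd * Nd - 1) (real msd / \<Omega>sd))"
    using erlang_distributed_sum_gamma_pdf[OF indep, of "\<lambda>j. Inr (Inl j)" "{1..Nd}"] N m \<Omega> sd
    by (simp add: all_links_def link_idx_def image_subset_iff inj_on_def)
  show "distributed M lborel (\<lambda>\<omega>. \<Sum>k=1..Nd. Grd k \<omega>) (erlang_density (mrd * Nd - 1) (real mrd / \<Omega>rd))"
    using erlang_distributed_sum_gamma_pdf[OF indep, of "\<lambda>k. Inr (Inr k)" "{1..Nd}"] N m \<Omega> rd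
    by (simp add: all_links_def link_idx_def image_subset_iff inj_on_def)
  show "indep_var borel (\<lambda>\<omega>. \<Sum>i=1..Nr. Gsr i \<omega>) borel (\<lambda>\<omega>. \<Sum>k=1..Nd. Grd k \<omega>)"
    using indep_var_sum_sum[OF indep, of "Inl ` {1..Nr}" "Inr ` Inr ` {1..Nd}"]
    by (auto simp: sum.reindex all_links_def link_idx_def)
qed

theorem mainTheorem7:
  fixes M :: "'a measure"
    and Nr Nd msr msd mrd :: nat
    and \<Omega>sr \<Omega>sd \<Omega>rd a1 a2 :: real
    and Gsr Gsd Grd :: "nat \<Rightarrow> 'a \<Rightarrow> real"
  assumes "prob_space M"
    and "Nr > 0" "Nd > 0" "msr > 0" "msd > 0" "mrd > 0"
    and "\<Omega>sr > 0" "\<Omega>sd > 0" "\<Omega>rd > 0"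
    and "0 < a1" "a1 < 1" "0 < a2" "a2 < 1" "a1 + a2 = 1" "a1 > a2"
    and "\<And>i. i \<in> {1..Nr} \<Longrightarrow> distributed M lborel (Gsr i) (\<lambda>x. ennreal (gamma_pdf msr \<Omega>sr x))"
    and "\<And>j. j \<in> {1..Nd} \<Longrightarrow> distributed M lborel (Gsd j) (\<lambda>x. ennreal (gamma_pdf msd \<Omega>sd x))"
    and "\<And>k. k \<in> {1..Nd} \<Longrightarrow> distributed M lborel (Grd k) (\<lambda>x. ennreal (gamma_pdf mrd \<Omega>rd x))"
    and "prob_space.indep_vars M (\<lambda>_. borel) (all_links Gsr Gsd Grd) (link_idx Nr Nd)"
  shows
    "let gsr = (\<lambda>\<omega>. \<Sum>i=1..Nr. Gsr i \<omega>);
         gsd = (\<lambda>\<omega>. \<Sum>j=1..Nd. Gsd j \<omega>);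
         grd = (\<lambda>\<omega>. \<Sum>k=1..Nd. Grd k \<omega>);
         Y = (\<lambda>\<omega>. min (a2 * gsr \<omega>) (grd \<omega>));
         X = (\<lambda>\<omega>. min (gsr \<omega>) (gsd \<omega>));
         C2 = (\<lambda>\<rho>::real. 1/2 * (\<integral>\<omega>. log 2 (1 + \<rho> * Y \<omega>) \<partial>M));
         C1 = (\<lambda>\<rho>::real. 1/2 * (\<integral>\<omega>. log 2 (1 + a1 * \<rho> * X \<omega> / (a2 * \<rho> * X \<omega> + 1)) \<partial>M));
         \<Xi> = real msr / (\<Omega>sr * a2) + real mrd / \<Omega>rd;
         L = 1 / (2 * ln 2) * (\<Sum>\<mu><msr * Nr. \<Sum>\<nu><mrd * Nd.
              real msr ^ \<mu> * real mrd ^ \<nu> /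
                (a2 ^ \<mu> * \<Omega>sr ^ \<mu> * \<Omega>rd ^ \<nu> * fact \<mu> * fact \<nu> * \<Xi> ^ (\<mu> + \<nu>)) *
              (Gamma (real (\<mu> + \<nu> + 1)) * (Digamma (real (\<mu> + \<nu> + 1)) - ln \<Xi>)
               - (if \<mu> + \<nu> = 0 then 0
                  else real (\<mu> + \<nu>) * Gamma (real (\<mu> + \<nu>)) * (Digamma (real (\<mu> + \<nu>)) - ln \<Xi>))))
     in ((\<lambda>\<rho>. C2 \<rho> - 1/2 * log 2 \<rho>) \<longlongrightarrow> L) at_top
        \<and> (\<lambda>\<rho>. C1 \<rho> + C2 \<rho> - 1/2 * log 2 \<rho>) \<in> O[at_top](\<lambda>_. 1)"
proof -
  interpret prob_space M by fact
  note gains = mrc_gains_distributed[OF assms(19,2-9,16-18)]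
  define gsr gsd grd where "gsr \<omega> = (\<Sum>i=1..Nr. Gsr i \<omega>)" and "gsd \<omega> = (\<Sum>j=1..Nd. Gsd j \<omega>)"
    and "grd \<omega> = (\<Sum>k=1..Nd. Grd k \<omega>)" for \<omega>
  define C1 C2 where
    "C1 \<rho> = 1/2 * (\<integral>\<omega>. log 2 (1 + a1 * \<rho> * min (gsr \<omega>) (gsd \<omega>) / (a2 * \<rho> * min (gsr \<omega>) (gsd \<omega>) + 1)) \<partial>M)"
    and "C2 \<rho> = 1/2 * (\<integral>\<omega>. log 2 (1 + \<rho> * min (a2 * gsr \<omega>) (grd \<omega>)) \<partial>M)" for \<rho>
  have "distributed M lborel (\<lambda>\<omega>. a2 * gsr \<omega>) (erlang_density (msr * Nr - 1) (real msr / \<Omega>sr / a2))"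
    using gains(1) assms(4,7,12) by (intro erlang_distributed_mult_const) (auto simp: gsr_def)
  moreover have "indep_var borel (\<lambda>\<omega>. a2 * gsr \<omega>) borel grd"
    using indep_var_compose[OF gains(4), of "\<lambda>x. a2 * x" borel id borel]
    by (simp add: comp_def gsr_def[abs_def] grd_def[abs_def])
  ultimately have "((\<lambda>\<rho>. (\<integral>\<omega>. log 2 (1 + \<rho> * min (a2 * gsr \<omega>) (grd \<omega>)) \<partial>M) - log 2 \<rho>)
      \<longlongrightarrow> expected_ln_min_erlang (msr * Nr - 1) (real msr / \<Omega>sr / a2) (mrd * Nd - 1) (real mrd / \<Omega>rd) / ln 2) at_top"
    using gains(3) assms(4,6,7,9,12) by (intro tendsto_integral_log_min_erlang) (auto simp: grd_def[abs_def])
  from tendsto_mult_left[OF this, of "1/2"]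
  have offset: "((\<lambda>\<rho>. C2 \<rho> - 1/2 * log 2 \<rho>) \<longlongrightarrow> 1 / (2 * ln 2) *
      expected_ln_min_erlang (msr * Nr - 1) (real msr / \<Omega>sr / a2) (mrd * Nd - 1) (real mrd / \<Omega>rd)) at_top"
    by (simp add: C2_def right_diff_distrib)
  have "C1 \<in> O[at_top](\<lambda>_. 1)"
    using gains(1,2)[THEN distributed_measurable] gains(1,2)[THEN AE_erlang_distributed_nonneg] assms(10,12)
    by (simp add: C1_def[abs_def] gsr_def[abs_def] gsd_def[abs_def] integral_log_one_plus_sinr_bigo)
  moreover have "(\<lambda>\<rho>. C2 \<rho> - 1/2 * log 2 \<rho>) \<in> O[at_top](\<lambda>_. 1)"
    using offset by (intro bigoI_tendsto) auto
  ultimately have bigo: "(\<lambda>\<rho>. C1 \<rho> + C2 \<rho> - 1/2 * log 2 \<rho>) \<in> O[at_top](\<lambda>_. 1)"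
    using sum_in_bigo(1) by (fastforce simp: add_diff_eq)
  have "0 < msr * Nr" "0 < mrd * Nd"
    using assms(2-4,6) by simp_all
  from offset[unfolded expected_ln_min_erlang_fading[OF this]] bigo show ?thesis
    unfolding Let_def C1_def C2_def gsr_def gsd_def grd_def by (rule conjI)
qed

end
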